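(* Let $n\ge 2$, $k\ge 2$ and let $G=W(n,k)$ be the windmill graph. Then for every integer $r\ge 2$, $\varphi(G^r)=\frac{1}{2}k(n-1)\bigl(k(n-1)-1\bigr)$.
   Context: All graphs are finite, simple and without isolated vertices. $\mathbb{N}_0$ denotes the set of non-negative integers; for finite $A,B\subseteq\mathbb{N}_0$, $A+B=\{a+b: a\in A, b\in B\}$. An integer additive set-indexer (IASI) of a graph $G$ is an injective map $f$ from $V(G)$ to the finite non-empty subsets of $\mathbb{N}_0$ such that the induced edge map $f^+(uv)=f(u)+f(v)$ is injective on $E(G)$. A weak IASI (WIASI) is an IASI $f$ with $|f^+(uv)|=\max(|f(u)|,|f(v)|)$ for every edge $uv$ (equivalently, for every edge at least one end vertex has a singleton label). A vertex or edge is mono-indexed if its set-label has cardinality $1$. Every graph admits a WIASI. The sparing number $\varphi(G)$ is the minimum, over all WIASIs of $G$, of the number of mono-indexed edges of $G$. The $r$-th power $G^r$ has vertex set $V(G)$, two distinct vertices being adjacent iff their distance in $G$ is at most $r$. The windmill graph $W(n,k)$ is obtained from $k$ copies of the complete graph $K_n$ by identifying one vertex from each copy into a single shared vertex. *)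

theory Defs
  imports Main
begin

text \<open>A finite simple graph is given by a vertex set V and a set E of 2-element
subsets of V (undirected edges).\<close>

definition edge_label :: "('a \<Rightarrow> nat set) \<Rightarrow> 'a set \<Rightarrow> nat set" where
  "edge_label f e = {a + b | a b u v. e = {u, v} \<and> u \<noteq> v \<and> a \<in> f u \<and> b \<in> f v}"

definition is_IASI :: "'a set \<Rightarrow> 'a set set \<Rightarrow> ('a \<Rightarrow> nat set) \<Rightarrow> bool" where
  "is_IASI V E f \<longleftrightarrow>
     (\<forall>v\<in>V. finite (f v) \<and> f v \<noteq> {}) \<and> inj_on f V \<and> inj_on (edge_label f) E"

definition is_WIASI :: "'a set \<Rightarrow> 'a set set \<Rightarrow> ('a \<Rightarrow> nat set) \<Rightarrow> bool" where
  "is_WIASI V E f \<longleftrightarrow> is_IASI V E f \<and>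
     (\<forall>u v. {u, v} \<in> E \<longrightarrow> card (edge_label f {u, v}) = max (card (f u)) (card (f v)))"

definition mono_edges :: "'a set set \<Rightarrow> ('a \<Rightarrow> nat set) \<Rightarrow> nat" where
  "mono_edges E f = card {e \<in> E. card (edge_label f e) = 1}"

definition sparing_number :: "'a set \<Rightarrow> 'a set set \<Rightarrow> nat" where
  "sparing_number V E = Min {mono_edges E f | f. is_WIASI V E f}"

fun reach :: "'a set set \<Rightarrow> nat \<Rightarrow> 'a \<Rightarrow> 'a \<Rightarrow> bool" where
  "reach E 0 u v = (u = v)"
| "reach E (Suc m) u v = (reach E m u v \<or> (\<exists>w. reach E m u w \<and> {w, v} \<in> E))"

definition power_edges :: "'a set \<Rightarrow> 'a set set \<Rightarrow> nat \<Rightarrow> 'a set set" where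
  "power_edges V E r = {{u, v} | u v. u \<in> V \<and> v \<in> V \<and> u \<noteq> v \<and> reach E r u v}"

text \<open>Windmill W(n,k): shared vertex (0,0); copy i (1\<le>i\<le>k) of K_n consists of
 (0,0) together with (i,j), 1\<le>j\<le>n-1.\<close>
definition windmill_V :: "nat \<Rightarrow> nat \<Rightarrow> (nat \<times> nat) set" where
  "windmill_V n k = insert (0, 0) ({1..k} \<times> {1..n - 1})"

definition windmill_E :: "nat \<Rightarrow> nat \<Rightarrow> (nat \<times> nat) set set" where
  "windmill_E n k = {{x, y} | x y i. i \<in> {1..k} \<and>
      x \<in> insert (0, 0) ({i} \<times> {1..n - 1}) \<and> y \<in> insert (0, 0) ({i} \<times> {1..n - 1}) \<and> x \<noteq> y}"

end

theory Submission imports Defs begin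

(*
  Every two vertices of W(n,k) are joined by a path of length at most 2
  through the shared hub vertex, so for r >= 2 the power W(n,k)^r is the complete
  graph on its m = k(n-1)+1 vertices.  For a complete graph the sparing number is
  (m-1 choose 2):
   - lower bound: if two vertices carried non-singleton labels A, B, the label of
     the edge joining them would satisfy |A+B| > max(|A|,|B|), violating weakness;
     so at least m-1 vertices are mono-indexed, and an edge is mono-indexed exactly
     when both its ends are;
   - upper bound: label one vertex by {0,1} and the others by distinct singletons
     {2^i}; sums of two distinct powers of two determine the pair of exponents,
     which makes the edge labelling injective.
*)

unbundle bit_operations_syntax

section \<open>Sumsets of finite sets of naturals\<close>

definition sumset :: "nat set \<Rightarrow> nat set \<Rightarrow> nat set" where
  "sumset A B = {a + b |a b. a \<in> A \<and> b \<in> B}"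

lemma edge_label_pair: "u \<noteq> v \<Longrightarrow> edge_label f {u, v} = sumset (f u) (f v)"
  unfolding edge_label_def sumset_def
  by (auto simp: doubleton_eq_iff) (metis add.commute)+

lemma sumset_commute: "sumset A B = sumset B A"
  unfolding sumset_def using add.commute by blast

lemma finite_sumset:
  assumes "finite A" "finite B"
  shows "finite (sumset A B)"
proof -
  have "sumset A B = (\<lambda>(a, b). a + b) ` (A \<times> B)" unfolding sumset_def by auto
  then show ?thesis using assms by simp
qed

lemma sumset_singleton: "sumset A {b} = (\<lambda>a. a + b) ` A"
  unfolding sumset_def by auto

text \<open>A translate of A lies in A + B, hence |A| \<le> |A + B|.\<close>
lemma card_le_sumset:
  assumes "finite A" "finite B" "B \<noteq> {}"
  shows "card A \<le> card (sumset A B)"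
proof -
  have "(\<lambda>a. a + Min B) ` A \<subseteq> sumset A B"
    using Min_in[OF assms(2,3)] unfolding sumset_def by blast
  moreover have "card ((\<lambda>a. a + Min B) ` A) = card A" by (simp add: card_image)
  ultimately show ?thesis by (metis card_mono finite_sumset assms(1,2))
qed

text \<open>If |B| \<ge> 2, then A + min B together with max A + max B exceeds |A|.\<close>
lemma card_less_sumset:
  assumes "finite A" "finite B" "A \<noteq> {}" "card B \<ge> 2"
  shows "card A < card (sumset A B)"
proof -
  have "B \<noteq> {}" using assms(4) by auto
  have "Min B \<noteq> Max B"
  proof
    assume "Min B = Max B"
    then have "B \<subseteq> {Min B}"
      using Min_le[OF assms(2)] Max_ge[OF assms(2)] by (fastforce intro: antisym)
    then show False using assms(4) card_mono[of "{Min B}" B] by simp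
  qed
  moreover have "Min B \<le> Max B" using assms(2) \<open>B \<noteq> {}\<close> by simp
  ultimately have min_less_max: "Min B < Max B" by simp
  let ?T = "(\<lambda>a. a + Min B) ` A"
  have "Max A + Max B \<notin> ?T"
    using min_less_max Max_ge[OF assms(1)] by (fastforce simp: add_le_less_mono)
  moreover have "insert (Max A + Max B) ?T \<subseteq> sumset A B"
    using Max_in[OF assms(1,3)] Max_in[OF assms(2) \<open>B \<noteq> {}\<close>] Min_in[OF assms(2) \<open>B \<noteq> {}\<close>]
    unfolding sumset_def by blast
  ultimately have "card ?T + 1 \<le> card (sumset A B)"
    by (metis card_insert_disjoint card_mono finite_imageI finite_sumset assms(1,2) Suc_eq_plus1)
  then show ?thesis by (simp add: card_image)
qed

lemma card_sumset_eq_1: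
  assumes "finite A" "finite B" "A \<noteq> {}" "B \<noteq> {}"
  shows "card (sumset A B) = 1 \<longleftrightarrow> card A = 1 \<and> card B = 1"
proof
  assume "card (sumset A B) = 1"
  then have "card A \<le> 1" "card B \<le> 1"
    using card_le_sumset[OF assms(1,2,4)] card_le_sumset[OF assms(2,1,3)]
    by (simp_all add: sumset_commute)
  then show "card A = 1 \<and> card B = 1" using assms by (simp add: le_Suc_eq card_gt_0_iff)
next
  assume "card A = 1 \<and> card B = 1"
  then obtain a b where "A = {a}" "B = {b}" by (meson card_1_singletonE)
  then show "card (sumset A B) = 1" by (simp add: sumset_singleton)
qed

lemma bit_sum_two_powers:
  assumes "a \<noteq> b"
  shows "bit ((2::nat) ^ a + 2 ^ b) i \<longleftrightarrow> i = a \<or> i = b"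
proof -
  have "(2::nat) ^ a AND 2 ^ b = 0"
    using assms by (auto intro: bit_eqI simp: bit_and_iff bit_exp_iff)
  then have "(2::nat) ^ a + 2 ^ b = 2 ^ a OR 2 ^ b" by (rule disjunctive_add_eq_or)
  then show ?thesis by (simp add: bit_or_iff bit_exp_iff)
qed

lemma sum_two_powers_inj:
  assumes "a \<noteq> b" "c \<noteq> d" "(2::nat) ^ a + 2 ^ b = 2 ^ c + 2 ^ d"
  shows "{a, b} = {c, d}"
proof -
  have "i = a \<or> i = b \<longleftrightarrow> i = c \<or> i = d" for i
    using bit_sum_two_powers[OF assms(1)] bit_sum_two_powers[OF assms(2)] assms(3) by metis
  then show ?thesis by blast
qed

section \<open>The sparing number of a complete graph\<close>

definition complete_edges :: "'a set \<Rightarrow> 'a set set" where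
  "complete_edges V = {{u, v} |u v. u \<in> V \<and> v \<in> V \<and> u \<noteq> v}"

lemma complete_edges_eq: "complete_edges V = {e. e \<subseteq> V \<and> card e = 2}"
  unfolding complete_edges_def by (auto simp: card_2_iff)

lemma card_complete_edges: "finite V \<Longrightarrow> card (complete_edges V) = card V choose 2"
  by (simp add: complete_edges_eq n_subsets)

lemma complete_edges_iff: "{u, v} \<in> complete_edges V \<longleftrightarrow> u \<in> V \<and> v \<in> V \<and> u \<noteq> v"
  unfolding complete_edges_eq by (auto simp: card_2_iff doubleton_eq_iff)

lemma mono_edges_complete:
  assumes "finite V" "\<forall>v\<in>V. finite (f v) \<and> f v \<noteq> {}"
  shows "mono_edges (complete_edges V) f = card {v \<in> V. card (f v) = 1} choose 2"
proof -
  have "card (edge_label f {u, v}) = 1 \<longleftrightarrow> card (f u) = 1 \<and> card (f v) = 1"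
    if "u \<in> V" "v \<in> V" "u \<noteq> v" for u v
    using assms(2) that by (metis edge_label_pair card_sumset_eq_1)
  then have "{e \<in> complete_edges V. card (edge_label f e) = 1} = complete_edges {v \<in> V. card (f v) = 1}"
    unfolding complete_edges_def by auto
  then show ?thesis
    unfolding mono_edges_def using assms(1) by (simp add: card_complete_edges)
qed

text \<open>Lower bound: in a weak IASI of a complete graph at most one vertex has a
  non-singleton label, since two such ends would give an edge label that is too large.\<close>
lemma WIASI_complete_mono_vertices:
  assumes "finite V" "is_WIASI V (complete_edges V) f"
  shows "card V - 1 \<le> card {v \<in> V. card (f v) = 1}"
proof -
  let ?S = "{v \<in> V. card (f v) = 1}"
  have labels: "\<forall>v\<in>V. finite (f v) \<and> f v \<noteq> {}"
    using assms(2) unfolding is_WIASI_def is_IASI_def by blast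
  have big: "card (f x) \<ge> 2" if "x \<in> V - ?S" for x
  proof -
    have "card (f x) \<noteq> 0" "card (f x) \<noteq> 1" using labels that by auto
    then show ?thesis by presburger
  qed
  have "u = v" if "u \<in> V - ?S" "v \<in> V - ?S" for u v
  proof (rule ccontr)
    assume "u \<noteq> v"
    have "{u, v} \<in> complete_edges V" using that \<open>u \<noteq> v\<close> by (simp add: complete_edges_iff)
    then have "card (edge_label f {u, v}) = max (card (f u)) (card (f v))"
      using assms(2) unfolding is_WIASI_def by blast
    moreover have "finite (f u)" "f u \<noteq> {}" "finite (f v)" "f v \<noteq> {}"
      using labels that by auto
    then have "card (f u) < card (sumset (f u) (f v))" "card (f v) < card (sumset (f u) (f v))"
      using card_less_sumset big[OF that(1)] big[OF that(2)] sumset_commute by metis+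
    ultimately show False using edge_label_pair[OF \<open>u \<noteq> v\<close>] by simp
  qed
  then have "card (V - ?S) \<le> 1" using assms(1) by (simp add: card_le_Suc0_iff_eq)
  then show ?thesis using assms(1) card_Diff_subset[of ?S V] by (simp add: finite_subset)
qed

definition hub_labelling :: "'a \<Rightarrow> ('a \<Rightarrow> nat) \<Rightarrow> 'a \<Rightarrow> nat set" where
  "hub_labelling w g v = (if v = w then {0, 1} else {2 ^ g v})"

lemma hub_labelling_edge_away:
  "u \<noteq> v \<Longrightarrow> u \<noteq> w \<Longrightarrow> v \<noteq> w \<Longrightarrow> edge_label (hub_labelling w g) {u, v} = {2 ^ g u + 2 ^ g v}"
  by (simp add: edge_label_pair hub_labelling_def sumset_singleton)

lemma hub_labelling_edge_hub:
  "v \<noteq> w \<Longrightarrow> edge_label (hub_labelling w g) {w, v} = {2 ^ g v, 2 ^ g v + 1}"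
  by (simp add: edge_label_pair hub_labelling_def sumset_singleton add.commute)

lemma complete_edge_cases:
  assumes "e \<in> complete_edges V"
  obtains (hub) v where "v \<in> V" "v \<noteq> w" "e = {w, v}"
    | (away) u v where "u \<in> V" "v \<in> V" "u \<noteq> v" "u \<noteq> w" "v \<noteq> w" "e = {u, v}"
proof -
  obtain u v where uv: "u \<in> V" "v \<in> V" "u \<noteq> v" "e = {u, v}"
    using assms unfolding complete_edges_def by blast
  consider "u = w" | "v = w" | "u \<noteq> w" "v \<noteq> w" by blast
  then show thesis
  proof cases
    case 1
    then show thesis using uv hub by blast
  next
    case 2
    then show thesis using uv hub[of u] by (simp add: insert_commute)
  next
    case 3
    then show thesis using uv away by blast
  qed
qed

lemma card_hub_labelling_edge:
  assumes "e \<in> complete_edges V"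
  shows "card (edge_label (hub_labelling w g) e) = (if w \<in> e then 2 else 1)"
  using assms
proof (cases rule: complete_edge_cases[where w = w])
  case (hub v)
  then show ?thesis by (simp add: hub_labelling_edge_hub)
next
  case (away u v)
  then show ?thesis by (simp add: hub_labelling_edge_away)
qed

text \<open>Edge labels under the hub labelling determine the edge: hub edges have two-element
  labels whose minimum encodes the other end; the remaining edges have singleton labels
  2^a + 2^b, which encode {a, b} by binary expansion.\<close>
lemma hub_labelling_edge_inj:
  assumes "inj_on g V"
  shows "inj_on (edge_label (hub_labelling w g)) (complete_edges V)"
proof (rule inj_onI)
  let ?f = "hub_labelling w g"
  fix e1 e2
  assume e1: "e1 \<in> complete_edges V" and e2: "e2 \<in> complete_edges V"
    and same: "edge_label ?f e1 = edge_label ?f e2"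
  have "card (edge_label ?f e1) = card (edge_label ?f e2)" using same by (rule arg_cong)
  then have "(if w \<in> e1 then 2 else 1) = (if w \<in> e2 then 2 else (1::nat))"
    unfolding card_hub_labelling_edge[OF e1] card_hub_labelling_edge[OF e2] .
  then have hub_iff: "w \<in> e1 \<longleftrightarrow> w \<in> e2" by (cases "w \<in> e1"; cases "w \<in> e2") simp_all
  show "e1 = e2"
    using e1
  proof (cases rule: complete_edge_cases[where w = w])
    case hub1: (hub v1)
    from e2 hub_iff hub1 obtain v2 where hub2: "v2 \<in> V" "v2 \<noteq> w" "e2 = {w, v2}"
      by (cases rule: complete_edge_cases[where w = w]) auto
    have "Min (edge_label ?f e1) = 2 ^ g v1" "Min (edge_label ?f e2) = 2 ^ g v2"
      using hub1 hub2 by (simp_all add: hub_labelling_edge_hub)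
    then have "g v1 = g v2" using same by simp
    then show ?thesis using inj_onD[OF assms _ hub1(1) hub2(1)] hub1 hub2 by simp
  next
    case away1: (away u1 v1)
    from e2 hub_iff away1 obtain u2 v2
      where away2: "u2 \<in> V" "v2 \<in> V" "u2 \<noteq> v2" "u2 \<noteq> w" "v2 \<noteq> w" "e2 = {u2, v2}"
      by (cases rule: complete_edge_cases[where w = w]) auto
    have "g u1 \<noteq> g v1" using inj_onD[OF assms _ away1(1,2)] away1(3) by blast
    moreover have "g u2 \<noteq> g v2" using inj_onD[OF assms _ away2(1,2)] away2(3) by blast
    moreover have "(2::nat) ^ g u1 + 2 ^ g v1 = 2 ^ g u2 + 2 ^ g v2"
      using same away1 away2 by (simp add: hub_labelling_edge_away)
    ultimately have "{g u1, g v1} = {g u2, g v2}" by (rule sum_two_powers_inj)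
    moreover have "{u1, v1} \<subseteq> V" "{u2, v2} \<subseteq> V" using away1 away2 by simp_all
    ultimately have "{u1, v1} = {u2, v2}"
      using inj_on_image_eq_iff[OF assms] by (metis image_insert image_empty)
    then show ?thesis using away1(6) away2(6) by simp
  qed
qed

lemma hub_labelling_WIASI:
  assumes "inj_on g V"
  shows "is_WIASI V (complete_edges V) (hub_labelling w g)"
proof -
  let ?f = "hub_labelling w g"
  have card_f: "card (?f v) = (if v = w then 2 else 1)" for v
    by (simp add: hub_labelling_def)
  have "inj_on ?f V"
  proof (rule inj_onI)
    fix x y assume "x \<in> V" "y \<in> V" and same: "?f x = ?f y"
    have "x = w \<longleftrightarrow> card (?f x) = 2" "y = w \<longleftrightarrow> card (?f y) = 2"
      using card_f[of x] card_f[of y] by simp_all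
    then have "x = w \<longleftrightarrow> y = w" using same by simp
    moreover have "g x = g y" if "x \<noteq> w" "y \<noteq> w"
      using same that by (simp add: hub_labelling_def)
    ultimately show "x = y" using inj_onD[OF assms _ \<open>x \<in> V\<close> \<open>y \<in> V\<close>] by blast
  qed
  moreover have "card (edge_label ?f {u, v}) = max (card (?f u)) (card (?f v))"
    if "{u, v} \<in> complete_edges V" for u v
    using card_hub_labelling_edge[OF that, of w g] by (simp add: card_f)
  moreover have "\<forall>v\<in>V. finite (?f v) \<and> ?f v \<noteq> {}" by (simp add: hub_labelling_def)
  ultimately show ?thesis
    using hub_labelling_edge_inj[OF assms] unfolding is_WIASI_def is_IASI_def by blast
qed

text \<open>Under the hub labelling exactly the vertices other than w are mono-indexed.\<close>
lemma mono_edges_hub_labelling: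
  assumes "finite V" "w \<in> V"
  shows "mono_edges (complete_edges V) (hub_labelling w g) = (card V - 1) choose 2"
proof -
  have "{v \<in> V. card (hub_labelling w g v) = 1} = V - {w}"
    by (auto simp: hub_labelling_def)
  then show ?thesis
    using mono_edges_complete[OF assms(1)] assms by (simp add: hub_labelling_def)
qed

lemma mono_edges_complete_lower:
  assumes "finite V" "is_WIASI V (complete_edges V) f"
  shows "(card V - 1) choose 2 \<le> mono_edges (complete_edges V) f"
proof -
  have "\<forall>v\<in>V. finite (f v) \<and> f v \<noteq> {}"
    using assms(2) unfolding is_WIASI_def is_IASI_def by blast
  then show ?thesis
    using mono_edges_complete[OF assms(1)] WIASI_complete_mono_vertices[OF assms]
    by (simp add: binomial_right_mono)
qed

theorem sparing_number_complete:
  assumes "finite V" "V \<noteq> {}"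
  shows "sparing_number V (complete_edges V) = (card V - 1) choose 2"
proof -
  let ?M = "{mono_edges (complete_edges V) f |f. is_WIASI V (complete_edges V) f}"
  obtain w where "w \<in> V" using assms(2) by blast
  obtain g :: "'a \<Rightarrow> nat" where "inj_on g V"
    using finite_imp_inj_to_nat_seg[OF assms(1)] by blast
  then have "is_WIASI V (complete_edges V) (hub_labelling w g)" by (rule hub_labelling_WIASI)
  then have "mono_edges (complete_edges V) (hub_labelling w g) \<in> ?M" by blast
  then have attained: "(card V - 1) choose 2 \<in> ?M"
    by (simp only: mono_edges_hub_labelling[OF assms(1) \<open>w \<in> V\<close>])
  have lower: "(card V - 1) choose 2 \<le> m" if "m \<in> ?M" for m
    using that mono_edges_complete_lower[OF assms(1)] by blast
  have "?M \<subseteq> {..card (complete_edges V)}"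
    unfolding mono_edges_def using assms(1) by (auto simp: complete_edges_eq intro!: card_mono)
  then have "finite ?M" using finite_subset by blast
  then show ?thesis unfolding sparing_number_def using lower attained by (rule Min_eqI)
qed

section \<open>Powers of graphs with a universal vertex\<close>

lemma reach_add: "reach E m u v \<Longrightarrow> reach E (m + d) u v"
  by (induction d) simp_all

lemma reach_two_universal:
  assumes "\<forall>x\<in>V. x \<noteq> c \<longrightarrow> {c, x} \<in> E" "u \<in> V" "v \<in> V"
  shows "reach E 2 u v"
proof -
  have "reach E 1 u c"
    using assms(1,2) by (cases "u = c") (auto simp: insert_commute)
  then show ?thesis
    using assms(1,3) by (cases "v = c") (auto simp: numeral_2_eq_2)
qed

lemma power_edges_universal:
  assumes "\<forall>x\<in>V. x \<noteq> c \<longrightarrow> {c, x} \<in> E" "r \<ge> 2"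
  shows "power_edges V E r = complete_edges V"
proof -
  obtain d where r: "r = 2 + d" using assms(2) le_Suc_ex by blast
  have "reach E r u v" if "u \<in> V" "v \<in> V" for u v
    unfolding r by (rule reach_add[OF reach_two_universal[OF assms(1) that]])
  then have "u \<in> V \<and> v \<in> V \<and> u \<noteq> v \<and> reach E r u v \<longleftrightarrow> u \<in> V \<and> v \<in> V \<and> u \<noteq> v" for u v
    by blast
  then show ?thesis unfolding power_edges_def complete_edges_def by simp
qed

section \<open>The windmill graph\<close>

lemma windmill_hub_universal:
  "\<forall>x\<in>windmill_V n k. x \<noteq> (0, 0) \<longrightarrow> {(0, 0), x} \<in> windmill_E n k"
proof (intro ballI impI)
  fix x assume "x \<in> windmill_V n k" "x \<noteq> (0, 0)"
  then obtain i j where "x = (i, j)" "i \<in> {1..k}" "j \<in> {1..n - 1}"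
    unfolding windmill_V_def by auto
  then show "{(0, 0), x} \<in> windmill_E n k"
    unfolding windmill_E_def by (intro CollectI exI[of _ "(0, 0)"] exI[of _ x] exI[of _ i]) auto
qed

lemma windmill_V_finite: "finite (windmill_V n k)"
  by (simp add: windmill_V_def)

lemma card_windmill_V: "card (windmill_V n k) = k * (n - 1) + 1"
  by (simp add: windmill_V_def card_cartesian_product)

theorem mainTheorem8:
  fixes n k r :: nat
  assumes "n \<ge> 2" and "k \<ge> 2" and "r \<ge> 2"
  shows "sparing_number (windmill_V n k) (power_edges (windmill_V n k) (windmill_E n k) r)
         = k * (n - 1) * (k * (n - 1) - 1) div 2"
proof -
  have "power_edges (windmill_V n k) (windmill_E n k) r = complete_edges (windmill_V n k)"
    using power_edges_universal[OF windmill_hub_universal assms(3)] .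
  moreover have "windmill_V n k \<noteq> {}" by (simp add: windmill_V_def)
  ultimately show ?thesis
    using sparing_number_complete[OF windmill_V_finite] card_windmill_V
    by (simp add: choose_two)
qed

end
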